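(* Let $k\ge1$ be an integer and $\rho\in(0,1)$. For every $C\in\big[1,\tfrac{2+\rho^k}{2-\rho^k}\big]$, $$\tilde\rho(C)=\frac{C+1}{2}\rho^k-\frac{C-1}{2}.$$
   Context: $\mathbb{R}_k[X]$ denotes real polynomials of degree at most $k$, and $\|p\|_1$ is the sum of absolute values of the coefficients of $p$. For $C\ge1$, $\tilde\rho(C)=\min\{\max_{x\in[0,\rho]}|p(x)| : p\in\mathbb{R}_k[X],\ p(1)=1,\ \|p\|_1\le C\}$. *)

theory Defs
  imports "HOL-Analysis.Analysis" "HOL-Computational_Algebra.Polynomial"
begin

definition l1_norm :: "real poly \<Rightarrow> real" where
  "l1_norm p = (\<Sum>i\<le>degree p. \<bar>coeff p i\<bar>)"

text \<open>max over [0, rho] of |p(x)| (a maximum of a continuous function on a compact interval).\<close>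
definition sup_on :: "real \<Rightarrow> real poly \<Rightarrow> real" where
  "sup_on \<rho> p = (SUP x\<in>{0..\<rho>}. \<bar>poly p x\<bar>)"

definition tilde_rho_set :: "nat \<Rightarrow> real \<Rightarrow> real \<Rightarrow> real set" where
  "tilde_rho_set k \<rho> C =
     {sup_on \<rho> p | p. degree p \<le> k \<and> poly p 1 = 1 \<and> l1_norm p \<le> C}"

definition is_min_of :: "real set \<Rightarrow> real \<Rightarrow> bool" where
  "is_min_of S v \<longleftrightarrow> v \<in> S \<and> (\<forall>y\<in>S. v \<le> y)"

end

theory Submission
  imports Defs
begin

text \<open>Split the coefficients of \<open>p\<close> into a positive part \<open>P\<close> and a negative part \<open>N\<close>, so that
  \<open>P - N = p(1)\<close> and \<open>P + N = \<parallel>p\<parallel>\<^sub>1\<close>. On \<open>[0, 1]\<close> every monomial \<open>x\<^sup>i\<close> with \<open>i \<le> k\<close> lies between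
  \<open>x\<^sup>k\<close> and \<open>1\<close>, hence \<open>p(\<rho>) \<ge> \<rho>\<^sup>k P - N\<close>; with \<open>p(1) = 1\<close> and \<open>\<parallel>p\<parallel>\<^sub>1 \<le> C\<close> this is at least
  \<open>(C+1)/2 \<rho>\<^sup>k - (C-1)/2\<close>. The two-term polynomial \<open>(C+1)/2 x\<^sup>k - (C-1)/2\<close> attains the bound at
  \<open>\<rho>\<close>; it increases from \<open>-(C-1)/2\<close> to its value at \<open>\<rho>\<close>, so its maximum modulus on \<open>[0, \<rho>]\<close> is
  attained at \<open>\<rho>\<close> exactly when that value is at least \<open>(C-1)/2\<close>, i.e. when
  \<open>C \<le> (2+\<rho>\<^sup>k)/(2-\<rho>\<^sup>k)\<close>.\<close>

lemma l1_norm_eq_sum: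
  assumes "degree p \<le> n"
  shows "l1_norm p = (\<Sum>i\<le>n. \<bar>coeff p i\<bar>)"
  unfolding l1_norm_def
  by (rule sum.mono_neutral_left) (use assms in \<open>auto simp: coeff_eq_0\<close>)

lemma l1_norm_diff_le: "l1_norm (p - q) \<le> l1_norm p + l1_norm q"
proof -
  define n where "n = max (degree p) (degree q)"
  have "degree (p - q) \<le> n"
    unfolding n_def by (rule degree_diff_le_max)
  then have "l1_norm (p - q) = (\<Sum>i\<le>n. \<bar>coeff p i - coeff q i\<bar>)"
    by (simp add: l1_norm_eq_sum)
  also have "\<dots> \<le> (\<Sum>i\<le>n. \<bar>coeff p i\<bar> + \<bar>coeff q i\<bar>)"
    by (rule sum_mono) (rule abs_triangle_ineq4)
  also have "\<dots> = l1_norm p + l1_norm q"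
    using l1_norm_eq_sum[of p n] l1_norm_eq_sum[of q n] by (simp add: sum.distrib n_def)
  finally show ?thesis .
qed

lemma l1_norm_monom [simp]: "l1_norm (monom a k) = \<bar>a\<bar>"
proof -
  have "\<bar>coeff (monom a k) i\<bar> = (if i = k then \<bar>a\<bar> else 0)" for i
    by (simp add: coeff_monom)
  then show ?thesis
    by (simp add: l1_norm_eq_sum[of _ k] degree_monom_le)
qed

lemma l1_norm_const [simp]: "l1_norm [:b:] = \<bar>b\<bar>"
  by (simp add: l1_norm_def)

lemma mult_power_ge_split:
  fixes c x :: real
  assumes "0 \<le> x" "x \<le> 1" "i \<le> k"
  shows "(c + \<bar>c\<bar>) / 2 * x ^ k - (\<bar>c\<bar> - c) / 2 \<le> c * x ^ i"
proof (cases "0 \<le> c")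
  case True
  have "x ^ k \<le> x ^ i"
    using assms by (intro power_decreasing) auto
  with True show ?thesis by (simp add: mult_left_mono)
next
  case False
  have "x ^ i \<le> 1" using assms by (simp add: power_le_one)
  with False have "c \<le> c * x ^ i"
    by (simp add: mult_le_cancel_left1)
  with False show ?thesis by simp
qed

lemma poly_ge_l1_norm:
  assumes "0 \<le> x" "x \<le> 1" "degree p \<le> k"
  shows "(l1_norm p + poly p 1) / 2 * x ^ k - (l1_norm p - poly p 1) / 2 \<le> poly p x"
proof -
  let ?c = "coeff p"
  have "(l1_norm p + poly p 1) / 2 * x ^ k - (l1_norm p - poly p 1) / 2 =
      (\<Sum>i\<le>degree p. (?c i + \<bar>?c i\<bar>) / 2 * x ^ k - (\<bar>?c i\<bar> - ?c i) / 2)"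
    by (simp add: l1_norm_def poly_altdef sum_subtractf sum.distrib add_divide_distrib
        diff_divide_distrib sum_divide_distrib[symmetric] sum_distrib_right[symmetric])
  also have "\<dots> \<le> (\<Sum>i\<le>degree p. ?c i * x ^ i)"
    using assms by (intro sum_mono mult_power_ge_split) auto
  also have "\<dots> = poly p x"
    by (simp add: poly_altdef)
  finally show ?thesis .
qed

lemma sup_on_ge:
  assumes "x \<in> {0..\<rho>}"
  shows "\<bar>poly p x\<bar> \<le> sup_on \<rho> p"
proof -
  have "compact ((\<lambda>x. \<bar>poly p x\<bar>) ` {0..\<rho>})"
    by (rule compact_continuous_image) (auto intro!: continuous_intros)
  then have "bdd_above ((\<lambda>x. \<bar>poly p x\<bar>) ` {0..\<rho>})"
    by (simp add: bounded_imp_bdd_above compact_imp_bounded)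
  then show ?thesis
    unfolding sup_on_def using assms by (rule cSUP_upper[rotated])
qed

lemma sup_on_eqI:
  assumes "x\<^sub>0 \<in> {0..\<rho>}" and "\<And>x. x \<in> {0..\<rho>} \<Longrightarrow> \<bar>poly p x\<bar> \<le> \<bar>poly p x\<^sub>0\<bar>"
  shows "sup_on \<rho> p = \<bar>poly p x\<^sub>0\<bar>"
  unfolding sup_on_def using assms by (intro cSup_eq_maximum) auto

lemma tilde_rho_set_lower_bound:
  assumes "0 \<le> \<rho>" "\<rho> \<le> 1" "y \<in> tilde_rho_set k \<rho> C"
  shows "(C + 1) / 2 * \<rho> ^ k - (C - 1) / 2 \<le> y"
proof -
  obtain p where p: "y = sup_on \<rho> p" "degree p \<le> k" "poly p 1 = 1" "l1_norm p \<le> C"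
    using assms(3) by (auto simp: tilde_rho_set_def)
  have "\<rho> ^ k \<le> 1"
    using assms by (simp add: power_le_one)
  with p(4) have "(C - l1_norm p) * (1 - \<rho> ^ k) \<ge> 0"
    by simp
  then have "(C + 1) / 2 * \<rho> ^ k - (C - 1) / 2
      \<le> (l1_norm p + 1) / 2 * \<rho> ^ k - (l1_norm p - 1) / 2"
    by (simp add: field_simps)
  also have "\<dots> \<le> poly p \<rho>"
    using poly_ge_l1_norm[OF assms(1,2) p(2)] p(3) by simp
  also have "\<dots> \<le> sup_on \<rho> p"
    using sup_on_ge[of \<rho> \<rho> p] assms(1) by simp
  finally show ?thesis
    using p(1) by simp
qed

definition extremal_poly :: "nat \<Rightarrow> real \<Rightarrow> real poly" where
  "extremal_poly k C = monom ((C + 1) / 2) k - [:(C - 1) / 2:]"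

lemma poly_extremal_poly: "poly (extremal_poly k C) x = (C + 1) / 2 * x ^ k - (C - 1) / 2"
  by (simp add: extremal_poly_def poly_monom)

lemma degree_extremal_poly: "degree (extremal_poly k C) \<le> k"
  unfolding extremal_poly_def
  by (rule order.trans[OF degree_diff_le_max]) (auto simp: degree_monom_le)

lemma l1_norm_extremal_poly:
  assumes "1 \<le> C"
  shows "l1_norm (extremal_poly k C) \<le> C"
proof -
  have "\<bar>(C + 1) / 2\<bar> + \<bar>(C - 1) / 2\<bar> = C"
    using assms by (simp add: field_simps)
  then show ?thesis
    using l1_norm_diff_le[of "monom ((C + 1) / 2) k" "[:(C - 1) / 2:]"]
    by (simp add: extremal_poly_def)
qed

lemma sup_on_extremal_poly:
  assumes "0 \<le> \<rho>" "\<rho> \<le> 1" "1 \<le> C" "C \<le> (2 + \<rho> ^ k) / (2 - \<rho> ^ k)"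
  shows "sup_on \<rho> (extremal_poly k C) = (C + 1) / 2 * \<rho> ^ k - (C - 1) / 2"
proof -
  let ?v = "(C + 1) / 2 * \<rho> ^ k - (C - 1) / 2"
  have "\<rho> ^ k \<le> 1"
    using assms(1,2) by (rule power_le_one)
  with assms(4) have "C * (2 - \<rho> ^ k) \<le> 2 + \<rho> ^ k"
    by (simp add: le_divide_eq)
  then have v_ge: "(C - 1) / 2 \<le> ?v"
    by (simp add: algebra_simps)
  have "\<bar>poly (extremal_poly k C) x\<bar> \<le> ?v" if "x \<in> {0..\<rho>}" for x
  proof -
    have "x ^ k \<le> \<rho> ^ k"
      using that by (simp add: power_mono)
    then have "(C + 1) / 2 * x ^ k \<le> (C + 1) / 2 * \<rho> ^ k"
      using assms(3) by (simp add: mult_left_mono)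
    moreover have "0 \<le> (C + 1) / 2 * x ^ k"
      using that assms(3) by simp
    ultimately show ?thesis
      using v_ge unfolding poly_extremal_poly abs_le_iff by (intro conjI) linarith+
  qed
  moreover have "poly (extremal_poly k C) \<rho> = ?v"
    by (simp add: poly_extremal_poly)
  moreover have "0 \<le> ?v"
    using assms(3) by (intro order_trans[OF _ v_ge]) simp
  ultimately show ?thesis
    using assms(1) sup_on_eqI[of \<rho> \<rho> "extremal_poly k C"] by simp
qed

theorem lemma2:
  fixes k :: nat and \<rho> C :: real
  assumes "k \<ge> 1" and "0 < \<rho>" and "\<rho> < 1"
    and "1 \<le> C" and "C \<le> (2 + \<rho> ^ k) / (2 - \<rho> ^ k)"
  shows "is_min_of (tilde_rho_set k \<rho> C) ((C + 1) / 2 * \<rho> ^ k - (C - 1) / 2)"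
proof -
  have "sup_on \<rho> (extremal_poly k C) = (C + 1) / 2 * \<rho> ^ k - (C - 1) / 2"
    using assms by (intro sup_on_extremal_poly) auto
  moreover have "poly (extremal_poly k C) 1 = 1"
    by (simp add: poly_extremal_poly field_simps)
  ultimately have "(C + 1) / 2 * \<rho> ^ k - (C - 1) / 2 \<in> tilde_rho_set k \<rho> C"
    unfolding tilde_rho_set_def
    using degree_extremal_poly l1_norm_extremal_poly[OF assms(4)] by force
  moreover have "\<forall>y \<in> tilde_rho_set k \<rho> C. (C + 1) / 2 * \<rho> ^ k - (C - 1) / 2 \<le> y"
    using assms(2,3) tilde_rho_set_lower_bound by auto
  ultimately show ?thesis
    unfolding is_min_of_def by blast
qed

end
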